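(* Let $n\ge 2$. The map sending a fully heterochronous ranked tree shape with $n$ leaves to its $\mathbf{F}$-matrix is a bijection between the set of fully heterochronous ranked tree shapes with $n$ leaves and the set of $(2n-2)\times(2n-2)$ lower triangular matrices $F=(F_{i,j})_{0\le i,j\le 2n-3}$ of non-negative integers satisfying the following constraints. 1. Rows are monotone increasing: $F_{i,j-1}\le F_{i,j}$ for $1\le j\le i\le 2n-3$. 2. Columns are monotone decreasing with difference at most $1$: $F_{i-1,j}-1\le F_{i,j}\le F_{i-1,j}$ for $0\le j<i\le 2n-3$. 3. (a) The diagonal entries are positive and satisfy $F_{0,0}=2$, $F_{i,i}=F_{i-1,i-1}\pm 1$ for $0<i<2n-3$, and $F_{2n-3,2n-3}=1$. (In the tree, $F_{i,i}=F_{i-1,i-1}-1$ if the node of rank $i$ is a leaf, i.e. the $i$-th event is a sampling event, and $F_{i,i}=F_{i-1,i-1}+1$ if it is an internal node, i.e. a coalescent event.) (b) The subdiagonal entries satisfy $F_{i,i-1}=F_{i-1,i-1}-1$ for $1\le i\le 2n-3$. (c) For $2\le i\le 2n-3$ and $1\le j\le i-2$, $$F_{i,j-1}+F_{i-1,j}-F_{i-1,j-1}-1\le F_{i,j}\le F_{i,j-1}+F_{i-1,j}-F_{i-1,j-1}.$$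
   Context: A fully heterochronous ranked tree shape with $n$ leaves is a rooted full binary tree (every node has out-degree $0$ or $2$), without leaf labels, with $n$ leaves and $n-1$ internal nodes, together with a total ordering of all $2n-1$ nodes (leaves included) such that nodes appear in increasing order along every path from the root to a leaf; the position of a node in this order, numbered $0,1,\dots,2n-2$, is its rank (the root has rank $0$). Two such objects are identified if there is an isomorphism of rooted trees preserving ranks. Its $\mathbf{F}$-matrix is the $(2n-2)\times(2n-2)$ lower triangular matrix $F$, with indices running from $0$ to $2n-3$, where for $0\le j\le i$ the entry $F_{i,j}$ is the number of edges from a node $v$ to a node $w$ (with $v$ the parent of $w$) such that the rank of $v$ is at most $j$ and the rank of $w$ is larger than $i$. *)

theory Defs
  imports Main
begin

text \<open>A fully heterochronous ranked tree shape with n leaves has 2n-1 nodes with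
pairwise distinct ranks 0..2n-2; since rank-preserving isomorphisms fix every rank,
an isomorphism class is determined exactly by the parent map on ranks. We therefore
represent a tree shape by its parent function p (on ranks), normalised to 0 outside
the non-root ranks {1..2n-2}.\<close>

definition children :: "(nat \<Rightarrow> nat) \<Rightarrow> nat \<Rightarrow> nat \<Rightarrow> nat set" where
  "children p n v = {w. 1 \<le> w \<and> w \<le> 2*n - 2 \<and> p w = v}"

definition is_leaf :: "(nat \<Rightarrow> nat) \<Rightarrow> nat \<Rightarrow> nat \<Rightarrow> bool" where
  "is_leaf p n v \<longleftrightarrow> children p n v = {}"

definition fh_ranked_tree_shapes :: "nat \<Rightarrow> (nat \<Rightarrow> nat) set" where
  "fh_ranked_tree_shapes n = {p.
      (\<forall>w. 1 \<le> w \<and> w \<le> 2*n - 2 \<longrightarrow> p w < w) \<and>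
      (\<forall>w. (w = 0 \<or> w > 2*n - 2) \<longrightarrow> p w = 0) \<and>
      (\<forall>v \<le> 2*n - 2. card (children p n v) = 0 \<or> card (children p n v) = 2) \<and>
      card {v. v \<le> 2*n - 2 \<and> is_leaf p n v} = n}"

text \<open>F-matrix, indices 0..2n-3, normalised to 0 outside the lower triangle.
The edges are exactly (p w, w) for w in {1..2n-2}.\<close>
definition F_matrix :: "nat \<Rightarrow> (nat \<Rightarrow> nat) \<Rightarrow> nat \<Rightarrow> nat \<Rightarrow> nat" where
  "F_matrix n p i j = (if j \<le> i \<and> i \<le> 2*n - 3
      then card {w. 1 \<le> w \<and> w \<le> 2*n - 2 \<and> p w \<le> j \<and> i < w} else 0)"

definition F_matrices :: "nat \<Rightarrow> (nat \<Rightarrow> nat \<Rightarrow> nat) set" where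
  "F_matrices n = {F.
      \<comment> \<open>lower triangular (2n-2)x(2n-2), entries outside the index range normalised to 0\<close>
      (\<forall>i j. \<not> (j \<le> i \<and> i \<le> 2*n - 3) \<longrightarrow> F i j = 0) \<and>
      \<comment> \<open>1. rows increasing\<close>
      (\<forall>i j. 1 \<le> j \<and> j \<le> i \<and> i \<le> 2*n - 3 \<longrightarrow> F i (j - 1) \<le> F i j) \<and>
      \<comment> \<open>2. columns decreasing with difference at most 1\<close>
      (\<forall>i j. j < i \<and> i \<le> 2*n - 3 \<longrightarrow>
          int (F (i - 1) j) - 1 \<le> int (F i j) \<and> F i j \<le> F (i - 1) j) \<and>
      \<comment> \<open>3(a) diagonal\<close>
      (\<forall>i \<le> 2*n - 3. F i i > 0) \<and>
      F 0 0 = 2 \<and>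
      (\<forall>i. 0 < i \<and> i < 2*n - 3 \<longrightarrow>
          int (F i i) = int (F (i - 1) (i - 1)) + 1 \<or> int (F i i) = int (F (i - 1) (i - 1)) - 1) \<and>
      F (2*n - 3) (2*n - 3) = 1 \<and>
      \<comment> \<open>3(b) subdiagonal\<close>
      (\<forall>i. 1 \<le> i \<and> i \<le> 2*n - 3 \<longrightarrow> int (F i (i - 1)) = int (F (i - 1) (i - 1)) - 1) \<and>
      \<comment> \<open>3(c)\<close>
      (\<forall>i j. 2 \<le> i \<and> i \<le> 2*n - 3 \<and> 1 \<le> j \<and> j \<le> i - 2 \<longrightarrow>
          int (F i (j - 1)) + int (F (i - 1) j) - int (F (i - 1) (j - 1)) - 1 \<le> int (F i j) \<and>
          int (F i j) \<le> int (F i (j - 1)) + int (F (i - 1) j) - int (F (i - 1) (j - 1)))}"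

end

theory Submission
  imports Defs
begin

text \<open>Write p for the parent map, so that F_{i,j} counts the ranks w > i with p w \<le> j.
Passing from row i - 1 to row i removes exactly the edge into rank i, hence row i - 1 exceeds
row i by the indicator of the columns j \<ge> p i. Every constraint on F follows from this
recurrence; on the diagonal, F_{i,i} is the number of lineages after event i and changes by the
number of children of i minus one. Conversely, the constraints make each row difference a 0/1 step
function whose jump is at some column below i; taking the jump as the parent of i recovers the tree,
which is binary (a single child at rank 2n - 3 is excluded by parity) and therefore has n leaves.\<close>

definition crossing_edges :: "(nat \<Rightarrow> nat) \<Rightarrow> nat \<Rightarrow> nat \<Rightarrow> nat \<Rightarrow> nat" where
  "crossing_edges p N i j = card {w \<in> {Suc i..N}. p w \<le> j}"

lemma crossing_edges_top [simp]: "crossing_edges p N N j = 0"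
  by (simp add: crossing_edges_def)

lemma crossing_edges_Suc_row:
  assumes "i < N"
  shows "crossing_edges p N i j = crossing_edges p N (Suc i) j + (if p (Suc i) \<le> j then 1 else 0)"
proof -
  have "{w \<in> {Suc i..N}. p w \<le> j} = {w \<in> {Suc (Suc i)..N}. p w \<le> j} \<union> (if p (Suc i) \<le> j then {Suc i} else {})"
    using assms by (auto simp: Suc_le_eq le_less)
  then show ?thesis
    unfolding crossing_edges_def by (simp only:) (subst card_Un_disjoint; auto)
qed

lemma crossing_edges_mono: "j \<le> j' \<Longrightarrow> crossing_edges p N i j \<le> crossing_edges p N i j'"
  unfolding crossing_edges_def by (rule card_mono) auto

lemma crossing_edges_split:
  "crossing_edges p N i j = card {w \<in> {Suc i..N}. p w = j} + card {w \<in> {Suc i..N}. p w < j}"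
proof -
  have "{w \<in> {Suc i..N}. p w \<le> j} = {w \<in> {Suc i..N}. p w = j} \<union> {w \<in> {Suc i..N}. p w < j}"
    by auto
  then show ?thesis
    unfolding crossing_edges_def by (simp only:) (subst card_Un_disjoint; auto)
qed

lemma crossing_edges_mixed_difference:
  assumes "i < N"
  shows "crossing_edges p N (Suc i) (Suc j) + crossing_edges p N i j + (if p (Suc i) = Suc j then 1 else 0)
       = crossing_edges p N (Suc i) j + crossing_edges p N i (Suc j)"
  using crossing_edges_Suc_row[OF assms, of p j] crossing_edges_Suc_row[OF assms, of p "Suc j"] by auto

lemma F_matrix_eq:
  "F_matrix n p i j = (if j \<le> i \<and> i \<le> 2*n - 3 then crossing_edges p (2*n - 2) i j else 0)"
proof -
  have "{w. 1 \<le> w \<and> w \<le> 2*n - 2 \<and> p w \<le> j \<and> i < w} = {w \<in> {Suc i..2*n - 2}. p w \<le> j}"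
    by auto
  then show ?thesis
    by (simp add: F_matrix_def crossing_edges_def)
qed

lemma F_matrix_eq_crossing_edges:
  "j \<le> i \<Longrightarrow> i \<le> 2*n - 2 \<Longrightarrow> F_matrix n p i j = crossing_edges p (2*n - 2) i j"
  by (cases "i = 2*n - 2") (auto simp: F_matrix_eq)

lemma card_children:
  assumes "\<And>w. 1 \<le> w \<Longrightarrow> w \<le> 2*n - 2 \<Longrightarrow> p w < w"
  shows "card (children p n v) = card {w \<in> {Suc v..2*n - 2}. p w = v}"
proof -
  have "children p n v = {w \<in> {Suc v..2*n - 2}. p w = v}"
    using assms by (force simp: children_def)
  then show ?thesis by simp
qed

lemma crossing_edges_root:
  "crossing_edges p (2*n - 2) 0 0 = card (children p n 0)"
  by (simp add: crossing_edges_split children_def)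

lemma crossing_edges_Suc_diag:
  assumes parent_less: "\<And>w. 1 \<le> w \<Longrightarrow> w \<le> 2*n - 2 \<Longrightarrow> p w < w" and "Suc i \<le> 2*n - 2"
  shows "crossing_edges p (2*n - 2) (Suc i) (Suc i) + 1
       = crossing_edges p (2*n - 2) i i + card (children p n (Suc i))"
proof -
  have "crossing_edges p (2*n - 2) (Suc i) (Suc i)
      = card {w \<in> {Suc (Suc i)..2*n - 2}. p w = Suc i} + card {w \<in> {Suc (Suc i)..2*n - 2}. p w < Suc i}"
    by (rule crossing_edges_split)
  also have "\<dots> = card (children p n (Suc i)) + crossing_edges p (2*n - 2) (Suc i) i"
    by (simp add: card_children[OF parent_less] crossing_edges_def less_Suc_eq_le)
  moreover have "crossing_edges p (2*n - 2) i i = crossing_edges p (2*n - 2) (Suc i) i + 1"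
    using crossing_edges_Suc_row[of i "2*n - 2" p i] parent_less[of "Suc i"] assms(2) by simp
  ultimately show ?thesis by simp
qed

lemma card_leaves_of_binary:
  assumes "n \<ge> 1"
    and parent_less: "\<And>w. 1 \<le> w \<Longrightarrow> w \<le> 2*n - 2 \<Longrightarrow> p w < w"
    and binary: "\<And>v. v \<le> 2*n - 2 \<Longrightarrow> card (children p n v) = 0 \<or> card (children p n v) = 2"
  shows "card {v. v \<le> 2*n - 2 \<and> is_leaf p n v} = n"
proof -
  let ?N = "2*n - 2"
  let ?internal = "{v \<in> {..?N}. \<not> is_leaf p n v}"
  have finite_children: "finite (children p n v)" for v
    by (simp add: children_def)
  have card_children: "card (children p n v) = (if v \<in> ?internal then 2 else 0)" if "v \<le> ?N" for v
    using binary[OF that] finite_children[of v] that by (auto simp: is_leaf_def)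
  have edges: "{1..?N} = (\<Union>v\<le>?N. children p n v)"
    using parent_less by (fastforce simp: children_def)
  have "?N = card (\<Union>v\<le>?N. children p n v)"
    by (simp flip: edges)
  also have "\<dots> = (\<Sum>v\<le>?N. card (children p n v))"
    by (rule card_UN_disjoint) (auto simp: finite_children children_def)
  also have "\<dots> = (\<Sum>v\<in>?internal. 2)"
    by (simp add: card_children sum.If_cases Int_def)
  finally have internal: "card ?internal = n - 1"
    by simp
  have "card {..?N} = card ({v \<in> {..?N}. is_leaf p n v} \<union> ?internal)"
    by (rule arg_cong[where f = card]) auto
  also have "\<dots> = card {v \<in> {..?N}. is_leaf p n v} + (n - 1)"
    using internal by (subst card_Un_disjoint) auto
  finally show ?thesis
    using \<open>n \<ge> 1\<close> by (simp add: atMost_def)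
qed

lemma all_pos_iff_all_Suc: "(\<forall>i>0. P i) \<longleftrightarrow> (\<forall>i. P (Suc i))"
  by (metis gr0_implies_Suc zero_less_Suc)

lemma F_matrices_iff:
  "F \<in> F_matrices n \<longleftrightarrow>
     (\<forall>i j. \<not> (j \<le> i \<and> i \<le> 2*n - 3) \<longrightarrow> F i j = 0) \<and>
     (\<forall>i j. j < i \<and> i \<le> 2*n - 3 \<longrightarrow> F i j \<le> F i (Suc j)) \<and>
     (\<forall>i j. j \<le> i \<and> Suc i \<le> 2*n - 3 \<longrightarrow> F (Suc i) j \<le> F i j \<and> F i j \<le> F (Suc i) j + 1) \<and>
     (\<forall>i \<le> 2*n - 3. 0 < F i i) \<and>
     F 0 0 = 2 \<and>
     (\<forall>i. Suc i < 2*n - 3 \<longrightarrow> F (Suc i) (Suc i) = F i i + 1 \<or> F (Suc i) (Suc i) + 1 = F i i) \<and>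
     F (2*n - 3) (2*n - 3) = 1 \<and>
     (\<forall>i. Suc i \<le> 2*n - 3 \<longrightarrow> F (Suc i) i + 1 = F i i) \<and>
     (\<forall>i j. Suc j < i \<and> Suc i \<le> 2*n - 3 \<longrightarrow>
        F (Suc i) (Suc j) + F i j \<le> F (Suc i) j + F i (Suc j) \<and>
        F (Suc i) j + F i (Suc j) \<le> F (Suc i) (Suc j) + F i j + 1)"
proof -
  define M where "M = 2*n - 3"
  have int_shift: "int a - 1 \<le> int b \<longleftrightarrow> a \<le> b + 1"
    "int a = int b + 1 \<longleftrightarrow> a = b + 1" "int a = int b - 1 \<longleftrightarrow> a + 1 = b"
    "int a + int b - int c - 1 \<le> int d \<longleftrightarrow> a + b \<le> d + c + 1"
    "int d \<le> int a + int b - int c \<longleftrightarrow> d + c \<le> a + b" for a b c d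
    by linarith+
  have rows: "(\<forall>i j. 1 \<le> j \<and> j \<le> i \<and> i \<le> M \<longrightarrow> F i (j - 1) \<le> F i j) \<longleftrightarrow>
      (\<forall>i j. j < i \<and> i \<le> M \<longrightarrow> F i j \<le> F i (Suc j))"
    using all_pos_iff_all_Suc[where P = "\<lambda>j. \<forall>i. j \<le> i \<and> i \<le> M \<longrightarrow> F i (j - 1) \<le> F i j"]
    by (auto simp: Suc_le_eq)
  have cols: "(\<forall>i j. j < i \<and> i \<le> M \<longrightarrow> int (F (i - 1) j) - 1 \<le> int (F i j) \<and> F i j \<le> F (i - 1) j) \<longleftrightarrow>
      (\<forall>i j. j \<le> i \<and> Suc i \<le> M \<longrightarrow> F (Suc i) j \<le> F i j \<and> F i j \<le> F (Suc i) j + 1)"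
    using all_pos_iff_all_Suc[where P = "\<lambda>i. \<forall>j. j < i \<and> i \<le> M \<longrightarrow> int (F (i - 1) j) - 1 \<le> int (F i j) \<and> F i j \<le> F (i - 1) j"]
    by (auto simp: int_shift less_Suc_eq_le)
  have diag: "(\<forall>i. 0 < i \<and> i < M \<longrightarrow>
          int (F i i) = int (F (i - 1) (i - 1)) + 1 \<or> int (F i i) = int (F (i - 1) (i - 1)) - 1) \<longleftrightarrow>
      (\<forall>i. Suc i < M \<longrightarrow> F (Suc i) (Suc i) = F i i + 1 \<or> F (Suc i) (Suc i) + 1 = F i i)"
    using all_pos_iff_all_Suc[where P = "\<lambda>i. i < M \<longrightarrow>
          int (F i i) = int (F (i - 1) (i - 1)) + 1 \<or> int (F i i) = int (F (i - 1) (i - 1)) - 1"]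
    by (auto simp: int_shift)
  have subdiag: "(\<forall>i. 1 \<le> i \<and> i \<le> M \<longrightarrow> int (F i (i - 1)) = int (F (i - 1) (i - 1)) - 1) \<longleftrightarrow>
      (\<forall>i. Suc i \<le> M \<longrightarrow> F (Suc i) i + 1 = F i i)"
    using all_pos_iff_all_Suc[where P = "\<lambda>i. i \<le> M \<longrightarrow> int (F i (i - 1)) = int (F (i - 1) (i - 1)) - 1"]
    by (auto simp: int_shift)
  have mixed: "(\<forall>i j. 2 \<le> i \<and> i \<le> M \<and> 1 \<le> j \<and> j \<le> i - 2 \<longrightarrow>
          int (F i (j - 1)) + int (F (i - 1) j) - int (F (i - 1) (j - 1)) - 1 \<le> int (F i j) \<and>
          int (F i j) \<le> int (F i (j - 1)) + int (F (i - 1) j) - int (F (i - 1) (j - 1))) \<longleftrightarrow>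
      (\<forall>i j. Suc j < i \<and> Suc i \<le> M \<longrightarrow>
        F (Suc i) (Suc j) + F i j \<le> F (Suc i) j + F i (Suc j) \<and>
        F (Suc i) j + F i (Suc j) \<le> F (Suc i) (Suc j) + F i j + 1)"
    using all_pos_iff_all_Suc[where P = "\<lambda>i. \<forall>j>0. 2 \<le> i \<and> i \<le> M \<and> j \<le> i - 2 \<longrightarrow>
          int (F i (j - 1)) + int (F (i - 1) j) - int (F (i - 1) (j - 1)) - 1 \<le> int (F i j) \<and>
          int (F i j) \<le> int (F i (j - 1)) + int (F (i - 1) j) - int (F (i - 1) (j - 1))"]
      all_pos_iff_all_Suc[where P = "\<lambda>j. 2 \<le> Suc i \<and> Suc i \<le> M \<and> j \<le> Suc i - 2 \<longrightarrow>
          int (F (Suc i) (j - 1)) + int (F i j) - int (F i (j - 1)) - 1 \<le> int (F (Suc i) j) \<and>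
          int (F (Suc i) j) \<le> int (F (Suc i) (j - 1)) + int (F i j) - int (F i (j - 1))" for i]
    by (auto simp: int_shift)
  show ?thesis
    unfolding F_matrices_def mem_Collect_eq M_def[symmetric] rows cols diag subdiag mixed ..
qed

lemma F_matrices_outside:
  "F \<in> F_matrices n \<Longrightarrow> \<not> (j \<le> i \<and> i \<le> 2*n - 3) \<Longrightarrow> F i j = 0"
  by (simp add: F_matrices_def)

lemma F_matrix_in_F_matrices:
  assumes "n \<ge> 2" and p: "p \<in> fh_ranked_tree_shapes n"
  shows "F_matrix n p \<in> F_matrices n"
proof -
  define N where "N = 2*n - 2"
  have N: "N = Suc (2*n - 3)"
    using \<open>n \<ge> 2\<close> by (simp add: N_def)
  have parent_less: "\<And>w. 1 \<le> w \<Longrightarrow> w \<le> 2*n - 2 \<Longrightarrow> p w < w"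
    and binary: "\<And>v. v \<le> 2*n - 2 \<Longrightarrow> card (children p n v) = 0 \<or> card (children p n v) = 2"
    using p by (auto simp: fh_ranked_tree_shapes_def)
  let ?S = "crossing_edges p N"
  have F: "F_matrix n p i j = ?S i j" if "j \<le> i" "i \<le> N" for i j
    using that by (simp add: F_matrix_eq_crossing_edges N_def)
  have row_step: "?S i j = ?S (Suc i) j + (if p (Suc i) \<le> j then 1 else 0)" if "i < N" for i j
    using that by (rule crossing_edges_Suc_row)
  have diag_step: "?S i i = ?S (Suc i) i + 1" if "i < N" for i
    using row_step[OF that, of i] parent_less[of "Suc i"] that by (simp add: N_def)
  have diag_Suc: "?S (Suc i) (Suc i) + 1 = ?S i i + card (children p n (Suc i))" if "Suc i \<le> N" for i
    using crossing_edges_Suc_diag[OF parent_less] that by (simp add: N_def)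
  show ?thesis
    unfolding F_matrices_iff
  proof (intro conjI allI impI)
    fix i j :: nat
    assume "\<not> (j \<le> i \<and> i \<le> 2*n - 3)"
    then show "F_matrix n p i j = 0"
      by (auto simp: F_matrix_eq)
  next
    fix i j :: nat
    assume "j < i \<and> i \<le> 2*n - 3"
    then show "F_matrix n p i j \<le> F_matrix n p i (Suc j)"
      using crossing_edges_mono[of j "Suc j" p N i] by (simp add: F N)
  next
    fix i j :: nat
    assume "j \<le> i \<and> Suc i \<le> 2*n - 3"
    then show "F_matrix n p (Suc i) j \<le> F_matrix n p i j" and "F_matrix n p i j \<le> F_matrix n p (Suc i) j + 1"
      using row_step[of i j] by (simp_all add: F N)
  next
    fix i :: nat
    assume "i \<le> 2*n - 3"
    then show "0 < F_matrix n p i i"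
      using diag_step[of i] by (simp add: F N)
  next
    show "F_matrix n p 0 0 = 2"
      using diag_step[of 0] binary[of 0] crossing_edges_root[of p n] \<open>n \<ge> 2\<close> by (simp add: F N_def)
  next
    fix i :: nat
    assume "Suc i < 2*n - 3"
    then show "F_matrix n p (Suc i) (Suc i) = F_matrix n p i i + 1 \<or> F_matrix n p (Suc i) (Suc i) + 1 = F_matrix n p i i"
      using diag_Suc[of i] binary[of "Suc i"] by (auto simp: F N N_def)
  next
    show "F_matrix n p (2*n - 3) (2*n - 3) = 1"
      using diag_step[of "2*n - 3"] by (simp add: F N)
  next
    fix i :: nat
    assume "Suc i \<le> 2*n - 3"
    then show "F_matrix n p (Suc i) i + 1 = F_matrix n p i i"
      using diag_step[of i] by (simp add: F N)
  next
    fix i j :: nat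
    assume "Suc j < i \<and> Suc i \<le> 2*n - 3"
    then show "F_matrix n p (Suc i) (Suc j) + F_matrix n p i j \<le> F_matrix n p (Suc i) j + F_matrix n p i (Suc j)"
      and "F_matrix n p (Suc i) j + F_matrix n p i (Suc j) \<le> F_matrix n p (Suc i) (Suc j) + F_matrix n p i j + 1"
      using crossing_edges_mixed_difference[of i N p j] by (auto simp: F N split: if_splits)
  qed
qed

text \<open>Row w - 1 exceeds row w exactly from column p w on.\<close>
definition tree_of_F_matrix :: "nat \<Rightarrow> (nat \<Rightarrow> nat \<Rightarrow> nat) \<Rightarrow> nat \<Rightarrow> nat" where
  "tree_of_F_matrix n F w = (if 1 \<le> w \<and> w \<le> 2*n - 2 then LEAST j. F w j < F (w - 1) j else 0)"

lemma tree_of_F_matrix_F_matrix: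
  assumes "p \<in> fh_ranked_tree_shapes n"
  shows "tree_of_F_matrix n (F_matrix n p) = p"
proof
  have parent_less: "\<And>w. 1 \<le> w \<Longrightarrow> w \<le> 2*n - 2 \<Longrightarrow> p w < w"
    and root: "\<And>w. w = 0 \<or> 2*n - 2 < w \<Longrightarrow> p w = 0"
    using assms by (auto simp: fh_ranked_tree_shapes_def)
  fix w
  show "tree_of_F_matrix n (F_matrix n p) w = p w"
  proof (cases "1 \<le> w \<and> w \<le> 2*n - 2")
    case True
    then obtain i where w: "w = Suc i" and "i < 2*n - 2"
      by (metis Suc_le_eq Suc_pred le_eq_less_or_eq less_one)
    have "F_matrix n p (Suc i) j < F_matrix n p i j \<longleftrightarrow> p (Suc i) \<le> j \<and> j \<le> i" for j
    proof (cases "j \<le> i")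
      case True
      then show ?thesis
        using crossing_edges_Suc_row[OF \<open>i < 2*n - 2\<close>, of p j] \<open>i < 2*n - 2\<close>
        by (simp add: F_matrix_eq_crossing_edges)
    qed (simp add: F_matrix_def)
    moreover have "p (Suc i) \<le> i"
      using parent_less[of "Suc i"] \<open>i < 2*n - 2\<close> by simp
    ultimately show ?thesis
      using True by (auto simp: tree_of_F_matrix_def w intro: Least_equality)
  next
    case False
    then have "w = 0 \<or> 2*n - 2 < w"
      by linarith
    then show ?thesis
      unfolding tree_of_F_matrix_def if_not_P[OF False] by (rule root[symmetric])
  qed
qed

lemma mono_01_threshold:
  fixes d :: "nat \<Rightarrow> nat"
  assumes mono: "\<And>j. j < k \<Longrightarrow> d j \<le> d (Suc j)"
    and bounded: "\<And>j. j \<le> k \<Longrightarrow> d j \<le> 1"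
    and "d k = 1"
  shows "(LEAST j. 0 < d j) \<le> k"
    and "j \<le> k \<Longrightarrow> d j = (if (LEAST j. 0 < d j) \<le> j then 1 else 0)"
proof -
  let ?t = "LEAST j. 0 < d j"
  show "?t \<le> k"
    using \<open>d k = 1\<close> by (simp add: Least_le)
  have "0 < d ?t"
    using \<open>d k = 1\<close> by (metis LeastI zero_less_one)
  show "d j = (if ?t \<le> j then 1 else 0)" if "j \<le> k"
  proof (cases "?t \<le> j")
    case True
    have "d ?t \<le> d j"
      by (rule lift_Suc_mono_le_ivl[of "{..<k}"]) (use True that mono in auto)
    then show ?thesis
      using True \<open>0 < d ?t\<close> bounded[OF that] by simp
  next
    case False
    then have "\<not> 0 < d j"
      by (intro not_less_Least) simp
    then show ?thesis
      using False by simp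
  qed
qed

lemma F_matrices_column_step:
  assumes "n \<ge> 2" and F: "F \<in> F_matrices n" and "i < 2*n - 2"
  shows "j \<le> i \<Longrightarrow> F (Suc i) j \<le> F i j"
    and "j \<le> i \<Longrightarrow> F i j \<le> F (Suc i) j + 1"
    and "F i i = F (Suc i) i + 1"
    and "j < i \<Longrightarrow> F i j - F (Suc i) j \<le> F i (Suc j) - F (Suc i) (Suc j)"
proof -
  have rows: "\<And>i j. j < i \<Longrightarrow> i \<le> 2*n - 3 \<Longrightarrow> F i j \<le> F i (Suc j)"
    and cols: "\<And>i j. j \<le> i \<Longrightarrow> Suc i \<le> 2*n - 3 \<Longrightarrow> F (Suc i) j \<le> F i j \<and> F i j \<le> F (Suc i) j + 1"
    and last: "F (2*n - 3) (2*n - 3) = 1"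
    and subdiag: "\<And>i. Suc i \<le> 2*n - 3 \<Longrightarrow> F (Suc i) i + 1 = F i i"
    and mixed: "\<And>i j. Suc j < i \<Longrightarrow> Suc i \<le> 2*n - 3 \<Longrightarrow>
        F (Suc i) (Suc j) + F i j \<le> F (Suc i) j + F i (Suc j)"
    using F unfolding F_matrices_iff by blast+
  have last_row_zero: "F (2*n - 2) j = 0" for j
    by (rule F_matrices_outside[OF F]) (use \<open>n \<ge> 2\<close> in linarith)
  have last_but_one_row: "F (2*n - 3) j \<le> 1" if "j \<le> 2*n - 3" for j
  proof -
    have "F (2*n - 3) j \<le> F (2*n - 3) (2*n - 3)"
      by (rule lift_Suc_mono_le_ivl[of "{..<2*n - 3}"]) (use that rows in auto)
    with last show ?thesis
      by simp
  qed
  consider (inner) "Suc i \<le> 2*n - 3" | (last) "i = 2*n - 3" "Suc i = 2*n - 2"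
    using \<open>i < 2*n - 2\<close> by linarith
  note cases = this
  have col: "F (Suc i) j \<le> F i j \<and> F i j \<le> F (Suc i) j + 1" if "j \<le> i" for j
  proof (cases rule: cases)
    case inner
    then show ?thesis
      using cols[OF that] by simp
  next
    case last
    then show ?thesis
      using last_row_zero[of j] last_but_one_row[of j] that by simp
  qed
  then show "j \<le> i \<Longrightarrow> F (Suc i) j \<le> F i j" and "j \<le> i \<Longrightarrow> F i j \<le> F (Suc i) j + 1"
    by simp_all
  show diag: "F i i = F (Suc i) i + 1"
  proof (cases rule: cases)
    case inner
    then show ?thesis
      using subdiag[of i] by simp
  next
    case last
    then show ?thesis
      using last_row_zero[of i] \<open>F (2*n - 3) (2*n - 3) = 1\<close> by simp
  qed
  show "F i j - F (Suc i) j \<le> F i (Suc j) - F (Suc i) (Suc j)" if "j < i" for j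
  proof (cases rule: cases)
    case inner
    show ?thesis
    proof (cases "Suc j = i")
      case True
      then show ?thesis
        using col[of j] diag by (simp; arith)
    next
      case False
      then show ?thesis
        using mixed[of j i] inner that col[of j] col[of "Suc j"] by simp
    qed
  next
    case last
    then show ?thesis
      using rows[of j i] last_row_zero that by simp
  qed
qed

lemma F_matrices_row_difference:
  assumes "n \<ge> 2" and F: "F \<in> F_matrices n" and "i < 2*n - 2"
  shows "tree_of_F_matrix n F (Suc i) \<le> i"
    and "j \<le> i \<Longrightarrow> F i j = F (Suc i) j + (if tree_of_F_matrix n F (Suc i) \<le> j then 1 else 0)"
proof -
  define d where "d j = F i j - F (Suc i) j" for j
  note step = F_matrices_column_step[OF assms]
  have parent: "tree_of_F_matrix n F (Suc i) = (LEAST j. 0 < d j)"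
    using \<open>i < 2*n - 2\<close> by (simp add: tree_of_F_matrix_def d_def)
  have mono: "d j \<le> d (Suc j)" if "j < i" for j
    using step(4)[OF that] by (simp add: d_def)
  have bounded: "d j \<le> 1" if "j \<le> i" for j
    using step(2)[OF that] by (simp add: d_def)
  have "d i = 1"
    using step(3) by (simp add: d_def)
  have threshold: "tree_of_F_matrix n F (Suc i) \<le> i"
      "\<And>j. j \<le> i \<Longrightarrow> d j = (if tree_of_F_matrix n F (Suc i) \<le> j then 1 else 0)"
    unfolding parent using mono_01_threshold[of i d] mono bounded \<open>d i = 1\<close> by blast+
  show "tree_of_F_matrix n F (Suc i) \<le> i"
    by (rule threshold(1))
  show "F i j = F (Suc i) j + (if tree_of_F_matrix n F (Suc i) \<le> j then 1 else 0)" if "j \<le> i"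
    using threshold(2)[OF that] step(1)[OF that] by (simp add: d_def)
qed

lemma F_matrices_eq_crossing_edges:
  assumes "n \<ge> 2" and F: "F \<in> F_matrices n" and "j \<le> i" and "i \<le> 2*n - 2"
  shows "F i j = crossing_edges (tree_of_F_matrix n F) (2*n - 2) i j"
  using \<open>i \<le> 2*n - 2\<close> \<open>j \<le> i\<close>
proof (induction i arbitrary: j rule: inc_induct)
  case base
  have "F (2*n - 2) j = 0"
    by (rule F_matrices_outside[OF F]) (use \<open>n \<ge> 2\<close> in linarith)
  then show ?case
    by simp
next
  case (step i)
  then show ?case
    using F_matrices_row_difference(2)[OF \<open>n \<ge> 2\<close> F, of i j]
      crossing_edges_Suc_row[of i "2*n - 2" "tree_of_F_matrix n F" j]
    by simp
qed

lemma F_matrix_tree_of_F_matrix: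
  assumes "n \<ge> 2" and F: "F \<in> F_matrices n"
  shows "F_matrix n (tree_of_F_matrix n F) = F"
proof (intro ext)
  fix i j
  show "F_matrix n (tree_of_F_matrix n F) i j = F i j"
  proof (cases "j \<le> i \<and> i \<le> 2*n - 3")
    case True
    then show ?thesis
      using F_matrices_eq_crossing_edges[OF assms, of j i] by (auto simp: F_matrix_eq)
  next
    case False
    then show ?thesis
      unfolding F_matrix_eq if_not_P[OF False] by (rule F_matrices_outside[OF F, symmetric])
  qed
qed

lemma even_add_of_unit_steps:
  fixes f :: "nat \<Rightarrow> nat"
  assumes steps: "\<And>i. i < k \<Longrightarrow> f (Suc i) = f i + 1 \<or> f (Suc i) + 1 = f i"
  shows "i \<le> k \<Longrightarrow> even (f i + i) \<longleftrightarrow> even (f 0)"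
proof (induction i)
  case (Suc i)
  then have "even (f i + i) \<longleftrightarrow> even (f 0)" and "f (Suc i) = f i + 1 \<or> f (Suc i) + 1 = f i"
    using steps[of i] by simp_all
  then show ?case
    by presburger
qed simp

lemma tree_of_F_matrix_less:
  assumes "n \<ge> 2" and "F \<in> F_matrices n" and "1 \<le> w" and "w \<le> 2*n - 2"
  shows "tree_of_F_matrix n F w < w"
  using assms(3,4) F_matrices_row_difference(1)[OF assms(1,2), of "w - 1"] by (cases w) auto

lemma F_matrices_diag_Suc:
  assumes "n \<ge> 2" and F: "F \<in> F_matrices n" and "Suc i \<le> 2*n - 2"
  shows "F (Suc i) (Suc i) + 1 = F i i + card (children (tree_of_F_matrix n F) n (Suc i))"
  using crossing_edges_Suc_diag[OF tree_of_F_matrix_less[OF assms(1,2)] assms(3)]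
    F_matrices_eq_crossing_edges[OF assms(1,2), of i i]
    F_matrices_eq_crossing_edges[OF assms(1,2), of "Suc i" "Suc i"] assms(3)
  by simp

lemma tree_of_F_matrix_binary:
  assumes "n \<ge> 2" and F: "F \<in> F_matrices n" and "v \<le> 2*n - 2"
  shows "card (children (tree_of_F_matrix n F) n v) = 0 \<or> card (children (tree_of_F_matrix n F) n v) = 2"
proof -
  let ?children = "\<lambda>v. card (children (tree_of_F_matrix n F) n v)"
  have diag: "\<And>i. Suc i < 2*n - 3 \<Longrightarrow> F (Suc i) (Suc i) = F i i + 1 \<or> F (Suc i) (Suc i) + 1 = F i i"
    and "F 0 0 = 2" and "F (2*n - 3) (2*n - 3) = 1" and positive: "F (2*n - 4) (2*n - 4) > 0"
    using F unfolding F_matrices_iff by auto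
  consider (root) "v = 0" | (inner) i where "v = Suc i" "Suc i < 2*n - 3"
    | (last) "v = Suc (2*n - 4)" | (top) "v = 2*n - 2"
    using \<open>v \<le> 2*n - 2\<close> \<open>n \<ge> 2\<close> by (cases v) (auto, linarith)
  then show ?thesis
  proof cases
    case root
    then show ?thesis
      using crossing_edges_root[of "tree_of_F_matrix n F" n] F_matrices_eq_crossing_edges[OF assms(1,2), of 0 0]
        \<open>F 0 0 = 2\<close>
      by simp
  next
    case inner
    then show ?thesis
      using F_matrices_diag_Suc[OF assms(1,2), of i] diag[OF inner(2)] by fastforce
  next
    case last
    have "even (F (2*n - 4) (2*n - 4) + (2*n - 4))"
      using even_add_of_unit_steps[of "2*n - 4" "\<lambda>i. F i i" "2*n - 4"] diag \<open>F 0 0 = 2\<close> by simp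
    then have "F (2*n - 4) (2*n - 4) \<ge> 2"
      using positive by presburger
    moreover have "Suc (2*n - 4) \<le> 2*n - 2" and "Suc (2*n - 4) = 2*n - 3"
      using \<open>n \<ge> 2\<close> by linarith+
    ultimately show ?thesis
      using F_matrices_diag_Suc[OF assms(1,2), of "2*n - 4"] \<open>F (2*n - 3) (2*n - 3) = 1\<close> last by simp
  next
    case top
    then show ?thesis
      by (simp add: card_children[OF tree_of_F_matrix_less[OF assms(1,2)]])
  qed
qed

lemma tree_of_F_matrix_in_fh_ranked_tree_shapes:
  assumes "n \<ge> 2" and "F \<in> F_matrices n"
  shows "tree_of_F_matrix n F \<in> fh_ranked_tree_shapes n"
proof -
  note parent_less = tree_of_F_matrix_less[OF assms]
  note binary = tree_of_F_matrix_binary[OF assms]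
  have "tree_of_F_matrix n F w = 0" if "w = 0 \<or> 2*n - 2 < w" for w
    using that by (auto simp: tree_of_F_matrix_def)
  then show ?thesis
    unfolding fh_ranked_tree_shapes_def mem_Collect_eq
    using parent_less binary card_leaves_of_binary[OF _ parent_less binary] \<open>n \<ge> 2\<close>
    by auto
qed

theorem theorem2:
  fixes n :: nat
  assumes "n \<ge> 2"
  shows "bij_betw (F_matrix n) (fh_ranked_tree_shapes n) (F_matrices n)"
proof (rule bij_betw_byWitness[where f' = "tree_of_F_matrix n"])
  show "\<forall>p \<in> fh_ranked_tree_shapes n. tree_of_F_matrix n (F_matrix n p) = p"
    by (simp add: tree_of_F_matrix_F_matrix)
  show "\<forall>F \<in> F_matrices n. F_matrix n (tree_of_F_matrix n F) = F"
    using assms by (simp add: F_matrix_tree_of_F_matrix)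
  show "F_matrix n ` fh_ranked_tree_shapes n \<subseteq> F_matrices n"
    using assms by (auto intro: F_matrix_in_F_matrices)
  show "tree_of_F_matrix n ` F_matrices n \<subseteq> fh_ranked_tree_shapes n"
    using assms by (auto intro: tree_of_F_matrix_in_fh_ranked_tree_shapes)
qed

end
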